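(* Let $q \equiv 1 \pmod{14}$ be a prime power, let $\rho$ be a primitive element of $\mathbb F_q$, let $c \equiv 1 \pmod 4$ be a positive integer, and let $l = (3c+1)/4$. Suppose that $c = c^7_q(1,5)$ (respectively $c = c^7_q(1,3)$) and set $\Gamma = \operatorname{Cay}(G_{l,3,q},S(\pi))$ where $\pi = \Psi_1$ (respectively $\pi=\Psi_2$). Then $\Gamma$ is edge-regular with parameters $(8lq,\ 8l-2+q,\ 8l-2)$ and has a regular clique of order $8l$.
   Context: For an additive group $A$, $A^*=A\setminus\{0\}$. $G_{l,3,q} = \mathbb Z_l\oplus\mathbb Z_2^3\oplus\mathbb F_q$. $S_0=\{(g,0): g\in(\mathbb Z_l\oplus\mathbb Z_2^3)^*\}$; for a bijection $\pi:(\mathbb Z_2^3)^*\to\mathbb Z_7$ and $z\in(\mathbb Z_2^3)^*$, $S_{z,\pi}=\{(0,z,\rho^j): j\in\mathbb Z,\ j\equiv\pi(z)\pmod 7\}$; $S(\pi)=S_0\cup\bigcup_z S_{z,\pi}$; $\operatorname{Cay}(G_{l,3,q},S(\pi))$ has vertex set $G_{l,3,q}$ with $x\sim y$ iff $y-x\in S(\pi)$. Elements of $\mathbb Z_2^3$ are written $(x_2,x_1,x_0)$, $\hat x\in\{0,1\}$ is the integer representative of $x\in\mathbb Z_2$; $\phi(x_2,x_1,x_0)=\hat x_0+2\hat x_1+4\hat x_2\pmod 7$, $\operatorname{wt}(x_2,x_1,x_0)=\hat x_0+\hat x_1+\hat x_2$, $\sigma_+(x_2,x_1,x_0)=(x_1,x_0,x_2)$,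 $\sigma_-(x_2,x_1,x_0)=(x_0,x_2,x_1)$; $\Psi_1(\mathbf x)=\phi(\sigma_+(\mathbf x))$ for odd weight, $\phi(\sigma_-(\mathbf x))$ for even weight; $\Psi_2(\mathbf x)=\phi(\sigma_+(\mathbf x)+\mathbf x)$ for odd weight, $\phi((1,1,1)+\mathbf x)$ for even weight. Write $q=14r+1$; $C^7_q(i)=\{\rho^{7j+i}:0\le j\le 2r-1\}$, $c^7_q(a,b)=|(C^7_q(a)+1)\cap C^7_q(b)|$. A graph is edge-regular with parameters $(N,k,\lambda)$ if it is non-empty, has $N$ vertices, is $k$-regular, and every two adjacent vertices have exactly $\lambda$ common neighbours. A clique $\mathcal C$ is regular if every vertex outside $\mathcal C$ is adjacent to the same number $e>0$ of vertices of $\mathcal C$. *)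

theory Defs
  imports Main "HOL-Library.Cardinality"
begin

text \<open>Elements of Z_2^3 are triples (x2, x1, x0) of booleans (True = 1).\<close>
type_synonym z2_3 = "bool \<times> bool \<times> bool"

fun z2add :: "z2_3 \<Rightarrow> z2_3 \<Rightarrow> z2_3" where
  "z2add (a2, a1, a0) (b2, b1, b0) = (a2 \<noteq> b2, a1 \<noteq> b1, a0 \<noteq> b0)"

definition z2zero :: z2_3 where "z2zero = (False, False, False)"

fun phi :: "z2_3 \<Rightarrow> nat" where
  "phi (x2, x1, x0) = (of_bool x0 + 2 * of_bool x1 + 4 * of_bool x2) mod 7"

fun wt :: "z2_3 \<Rightarrow> nat" where
  "wt (x2, x1, x0) = of_bool x0 + of_bool x1 + of_bool x2"

fun sigma_plus :: "z2_3 \<Rightarrow> z2_3" where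
  "sigma_plus (x2, x1, x0) = (x1, x0, x2)"

fun sigma_minus :: "z2_3 \<Rightarrow> z2_3" where
  "sigma_minus (x2, x1, x0) = (x0, x2, x1)"

definition Psi1 :: "z2_3 \<Rightarrow> nat" where
  "Psi1 x = (if odd (wt x) then phi (sigma_plus x) else phi (sigma_minus x))"

definition Psi2 :: "z2_3 \<Rightarrow> nat" where
  "Psi2 x = (if odd (wt x) then phi (z2add (sigma_plus x) x)
             else phi (z2add (True, True, True) x))"

text \<open>Vertices of G_{l,3,q} = Z_l + Z_2^3 + F_q: Z_l represented by {0..<l}.\<close>
definition Gcar :: "nat \<Rightarrow> (nat \<times> z2_3 \<times> 'a) set" where
  "Gcar l = {0..<l} \<times> UNIV \<times> UNIV"

fun gdiff :: "nat \<Rightarrow> nat \<times> z2_3 \<times> 'a::ab_group_add \<Rightarrow> nat \<times> z2_3 \<times> 'a \<Rightarrow> nat \<times> z2_3 \<times> 'a" where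
  "gdiff l (a, z, x) (b, w, y) = ((b + l - a) mod l, z2add w z, y - x)"

definition S0 :: "nat \<Rightarrow> (nat \<times> z2_3 \<times> 'a::zero) set" where
  "S0 l = {(a, z, 0) | a z. a < l \<and> (a, z) \<noteq> (0, z2zero)}"

definition Sz :: "'a::field \<Rightarrow> (z2_3 \<Rightarrow> nat) \<Rightarrow> z2_3 \<Rightarrow> (nat \<times> z2_3 \<times> 'a) set" where
  "Sz \<rho> \<pi> z = {(0, z, \<rho> ^ j) | j. j mod 7 = \<pi> z mod 7}"

definition Sset :: "nat \<Rightarrow> 'a::field \<Rightarrow> (z2_3 \<Rightarrow> nat) \<Rightarrow> (nat \<times> z2_3 \<times> 'a) set" where
  "Sset l \<rho> \<pi> = S0 l \<union> (\<Union>z \<in> UNIV - {z2zero}. Sz \<rho> \<pi> z)"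

definition cay_adj :: "nat \<Rightarrow> 'a::field \<Rightarrow> (z2_3 \<Rightarrow> nat) \<Rightarrow> nat \<times> z2_3 \<times> 'a \<Rightarrow> nat \<times> z2_3 \<times> 'a \<Rightarrow> bool" where
  "cay_adj l \<rho> \<pi> u v \<longleftrightarrow> gdiff l u v \<in> Sset l \<rho> \<pi>"

definition primitive_element :: "'a::field \<Rightarrow> bool" where
  "primitive_element \<rho> \<longleftrightarrow> \<rho> \<noteq> 0 \<and> (\<forall>x. x \<noteq> 0 \<longrightarrow> (\<exists>j::nat. x = \<rho> ^ j))"

text \<open>Cyclotomic classes of order 7, q = 14 r + 1.\<close>
definition cyc_class :: "'a::field \<Rightarrow> nat \<Rightarrow> nat \<Rightarrow> 'a set" where
  "cyc_class \<rho> r i = {\<rho> ^ (7 * j + i) | j. j \<le> 2 * r - 1}"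

definition cyc_num :: "'a::field \<Rightarrow> nat \<Rightarrow> nat \<Rightarrow> nat \<Rightarrow> nat" where
  "cyc_num \<rho> r a b = card ((\<lambda>x. x + 1) ` cyc_class \<rho> r a \<inter> cyc_class \<rho> r b)"

definition edge_regular :: "'v set \<Rightarrow> ('v \<Rightarrow> 'v \<Rightarrow> bool) \<Rightarrow> nat \<Rightarrow> nat \<Rightarrow> nat \<Rightarrow> bool" where
  "edge_regular V adj N k lam \<longleftrightarrow>
     finite V \<and>
     (\<forall>u\<in>V. \<forall>v\<in>V. adj u v \<longleftrightarrow> adj v u) \<and> (\<forall>v\<in>V. \<not> adj v v) \<and>
     (\<exists>u\<in>V. \<exists>v\<in>V. adj u v) \<and>
     card V = N \<and>
     (\<forall>v\<in>V. card {w\<in>V. adj v w} = k) \<and>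
     (\<forall>u\<in>V. \<forall>v\<in>V. adj u v \<longrightarrow> card {w\<in>V. adj u w \<and> adj v w} = lam)"

definition regular_clique :: "'v set \<Rightarrow> ('v \<Rightarrow> 'v \<Rightarrow> bool) \<Rightarrow> 'v set \<Rightarrow> bool" where
  "regular_clique V adj C \<longleftrightarrow>
     C \<subseteq> V \<and> (\<forall>u\<in>C. \<forall>v\<in>C. u \<noteq> v \<longrightarrow> adj u v) \<and>
     (\<exists>e>0. \<forall>v\<in>V - C. card {w\<in>C. adj v w} = e)"

end

theory Submission
  imports Defs
begin

(*
  The graph is the Cayley graph of G = Z_l + Z_2^3 + F_q with a connection set S = S(pi) satisfying
  S = -S, so it is regular of degree |S| = 8l - 2 + q, and adjacent vertices u, v have as many common
  neighbours as there are d in S with d - D in S, where D = v - u.  If D lies in S_0, these d are the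
  other elements of S_0, because pi is injective.  If D = (0, z, y0) with y0 in the class C_(pi z), they
  are the (0, w, y) with w not in {0, z}, y in C_(pi w) and y - y0 in C_(pi (w + z)); dividing by y0
  shows that for each of the six w there are c^7_q(pi (w + z) - pi z, pi w - pi z) of them.  The
  labellings Psi1 and Psi2 are chosen so that these six pairs form one orbit of the symmetries
  (a, b) -> (b, a) and (a, b) -> (-a, b - a) of cyclotomic numbers, so the count is 6c = 8l - 2.
  The subgroup Z_l + Z_2^3 + 0 is a clique of size 8l, and a vertex (a, z, x) outside it with x in C_i
  is adjacent to exactly one vertex of it, namely (a, z + z', 0) with pi z' = i.
*)

lemma power_mod_of_power_eq_one:
  fixes x :: "'a::monoid_mult"
  assumes "x ^ d = 1"
  shows "x ^ k = x ^ (k mod d)"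
proof -
  have "x ^ k = x ^ (d * (k div d) + k mod d)"
    by simp
  also have "\<dots> = (x ^ d) ^ (k div d) * x ^ (k mod d)"
    by (simp only: power_add power_mult)
  finally show ?thesis using assms by simp
qed

lemma add_mod_sub_mod: "(u::nat) < n \<Longrightarrow> v < n \<Longrightarrow> ((u + v) mod n + n - v) mod n = u"
  by (cases "u + v < n") (simp_all add: mod_if le_mod_geq)

lemma sub_mod_add_mod: "(u::nat) < n \<Longrightarrow> v < n \<Longrightarrow> ((u + n - v) mod n + v) mod n = u"
  by (cases "v \<le> u") (auto simp add: mod_if le_mod_geq)

lemma minus_minus_mod: "(u::nat) < n \<Longrightarrow> (n - (n - u) mod n) mod n = u"
  by (cases "u = 0") simp_all

lemma sub_mod_sub_minus_mod:
  assumes "(u::nat) < n" "v < n"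
  shows "((v + n - u) mod n + n - (n - u) mod n) mod n = v"
proof -
  have "v + n - u = v + (n - u) mod n + (n - u) div n * n"
    using assms(1) by simp
  hence "(v + n - u) mod n = (v + (n - u) mod n) mod n"
    by (metis mod_mult_self1)
  thus ?thesis using add_mod_sub_mod[OF assms(2), of "(n - u) mod n"] assms(1) by simp
qed

lemma card_eq_if_involution:
  assumes "f ` A \<subseteq> B" "f ` B \<subseteq> A" "\<forall>x \<in> A \<union> B. f (f x) = x"
  shows "card A = card B"
  using assms by (intro bij_betw_same_card[of f] bij_betw_byWitness[of _ f]) auto

section \<open>The group Z_l + Z_2^3 + F_q and its Cayley graphs\<close>

lemma z2add_commute: "z2add w z = z2add z w"
  by (cases w, cases z) auto

lemma z2add_self [simp]: "z2add z z = z2zero"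
  by (cases z) (simp add: z2zero_def)

lemma z2add_zero_left [simp]: "z2add z2zero z = z"
  by (cases z) (simp add: z2zero_def)

lemma z2add_eq_zero_iff: "z2add w z = z2zero \<longleftrightarrow> w = z"
  by (cases w, cases z) (auto simp: z2zero_def)

lemma z2add_eq_right_iff: "z2add w z = z \<longleftrightarrow> w = z2zero"
  by (cases w, cases z) (auto simp: z2zero_def)

lemma z2add_eq_iff: "z2add w z = u \<longleftrightarrow> w = z2add u z"
  by (cases w, cases z, cases u) auto

lemma z2add_diff: "z2add (z2add w u) (z2add v u) = z2add w v"
  by (cases w, cases u, cases v) auto

lemma card_z2_3: "CARD(z2_3) = 8"
  by (simp flip: UNIV_Times_UNIV add: card_cartesian_product)

lemma of_nat_sub_mod:
  assumes "a < l"
  shows "int ((b + l - a) mod l) = (int b - int a) mod int l"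
proof -
  have "int (b + l - a) = (int b - int a) + int l" using assms by simp
  thus ?thesis by (simp add: of_nat_mod)
qed

lemma sub_mod_eq_zero_iff:
  assumes "a < l" "b < (l::nat)"
  shows "(b + l - a) mod l = 0 \<longleftrightarrow> a = b"
proof (cases "a \<le> b")
  case True
  hence "b + l - a = (b - a) + l" by linarith
  hence "(b + l - a) mod l = (b - a) mod l" by simp
  thus ?thesis using True assms by auto
qed (use assms in simp)

lemma sub_mod_sub_mod:
  assumes "a < l" "b < l" "c < (l::nat)"
  shows "((c + l - a) mod l + l - (b + l - a) mod l) mod l = (c + l - b) mod l"
proof -
  have "int (((c + l - a) mod l + l - (b + l - a) mod l) mod l)
      = ((int c - int a) mod int l - (int b - int a) mod int l) mod int l"
    using assms by (simp add: of_nat_sub_mod)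
  also have "\<dots> = int ((c + l - b) mod l)"
    using assms by (simp add: of_nat_sub_mod mod_diff_eq)
  finally show ?thesis by simp
qed

lemma mem_Gcar_iff [simp]: "(a, z, x) \<in> Gcar l \<longleftrightarrow> a < l"
  by (simp add: Gcar_def)

lemma finite_Gcar: "finite (Gcar l :: (nat \<times> z2_3 \<times> 'a::finite) set)"
  by (simp add: Gcar_def)

lemma card_Gcar: "card (Gcar l :: (nat \<times> z2_3 \<times> 'a::finite) set) = 8 * l * CARD('a)"
  by (simp add: Gcar_def card_cartesian_product card_z2_3)

lemma gdiff_mem_Gcar: "0 < l \<Longrightarrow> gdiff l u v \<in> Gcar l"
  by (cases u, cases v) simp

lemma gdiff_self [simp]: "u \<in> Gcar l \<Longrightarrow> gdiff l u u = (0, z2zero, 0)"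
  by (cases u) simp

lemma gdiff_zero_right:
  "a < l \<Longrightarrow> gdiff l (a, z, x) (0, z2zero, 0) = (if a = 0 then 0 else l - a, z, - x)"
  by simp

lemma gdiff_eq_zero_iff:
  "u \<in> Gcar l \<Longrightarrow> v \<in> Gcar l \<Longrightarrow> gdiff l u v = (0, z2zero, 0) \<longleftrightarrow> u = v"
  by (cases u, cases v) (auto simp: sub_mod_eq_zero_iff z2add_eq_zero_iff)

lemma gdiff_gdiff:
  "u \<in> Gcar l \<Longrightarrow> v \<in> Gcar l \<Longrightarrow> w \<in> Gcar l \<Longrightarrow>
    gdiff l (gdiff l u v) (gdiff l u w) = gdiff l v (w :: nat \<times> z2_3 \<times> 'a::ab_group_add)"
  by (cases u, cases v, cases w) (simp add: sub_mod_sub_mod z2add_diff)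

lemma card_gdiff_translate:
  fixes u :: "nat \<times> z2_3 \<times> 'a::{finite,ab_group_add}"
  assumes "0 < l" "u \<in> Gcar l"
  shows "card {w \<in> Gcar l. P (gdiff l u w)} = card {d \<in> Gcar l. P d}"
proof -
  have inj: "inj_on (gdiff l u) (Gcar l)"
  proof (rule inj_onI)
    fix v w assume vw: "v \<in> Gcar l" "w \<in> Gcar l" "gdiff l u v = gdiff l u w"
    have "gdiff l v w = gdiff l (gdiff l u v) (gdiff l u w)"
      using gdiff_gdiff[OF assms(2) vw(1,2)] by simp
    also have "\<dots> = (0, z2zero, 0)"
      using vw(3) gdiff_self[OF gdiff_mem_Gcar[OF assms(1)]] by simp
    finally show "v = w" using vw(1,2) gdiff_eq_zero_iff by blast
  qed
  moreover have "gdiff l u ` Gcar l \<subseteq> Gcar l"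
    using gdiff_mem_Gcar[OF assms(1)] by blast
  ultimately have surj: "gdiff l u ` Gcar l = Gcar l"
    by (intro endo_inj_surj[OF finite_Gcar])
  have "gdiff l u ` {w \<in> Gcar l. P (gdiff l u w)} = {d \<in> gdiff l u ` Gcar l. P d}"
    by auto
  also have "\<dots> = {d \<in> Gcar l. P d}"
    by (simp only: surj)
  finally have "card {d \<in> Gcar l. P d} = card (gdiff l u ` {w \<in> Gcar l. P (gdiff l u w)})"
    by simp
  also have "\<dots> = card {w \<in> Gcar l. P (gdiff l u w)}"
    by (rule card_image, rule inj_on_subset[OF inj]) blast
  finally show ?thesis by simp
qed

lemma card_cayley_neighbours:
  fixes u :: "nat \<times> z2_3 \<times> 'a::{finite,ab_group_add}"
  assumes "0 < l" "u \<in> Gcar l" "T \<subseteq> Gcar l"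
  shows "card {w \<in> Gcar l. gdiff l u w \<in> T} = card T"
  using card_gdiff_translate[OF assms(1,2), of "\<lambda>d. d \<in> T"] assms(3)
  by (simp add: Int_absorb1 Collect_conj_eq)

lemma card_cayley_common_neighbours:
  fixes u :: "nat \<times> z2_3 \<times> 'a::{finite,ab_group_add}"
  assumes "0 < l" "u \<in> Gcar l" "v \<in> Gcar l" "T \<subseteq> Gcar l"
  shows "card {w \<in> Gcar l. gdiff l u w \<in> T \<and> gdiff l v w \<in> T}
    = card {d \<in> T. gdiff l (gdiff l u v) d \<in> T}"
proof -
  have "{w \<in> Gcar l. gdiff l u w \<in> T \<and> gdiff l v w \<in> T}
      = {w \<in> Gcar l. gdiff l u w \<in> T \<and> gdiff l (gdiff l u v) (gdiff l u w) \<in> T}"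
    by (rule Collect_cong) (auto simp: gdiff_gdiff[OF assms(2,3)])
  also have "card \<dots> = card {d \<in> Gcar l. d \<in> T \<and> gdiff l (gdiff l u v) d \<in> T}"
    by (rule card_gdiff_translate[OF assms(1,2)])
  also have "{d \<in> Gcar l. d \<in> T \<and> gdiff l (gdiff l u v) d \<in> T}
      = {d \<in> T. gdiff l (gdiff l u v) d \<in> T}"
    using assms(4) by blast
  finally show ?thesis .
qed

(* gdiff l d 0 is -d, so the hypothesis says T = -T. *)
lemma gdiff_swap_mem:
  assumes "u \<in> Gcar l" "v \<in> Gcar l"
    and "\<And>d. d \<in> T \<Longrightarrow> gdiff l d (0, z2zero, 0) \<in> T"
    and "gdiff l u v \<in> T"
  shows "gdiff l v (u :: nat \<times> z2_3 \<times> 'a::ab_group_add) \<in> T"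
  using assms(3)[OF assms(4)] gdiff_gdiff[OF assms(1,2,1)] assms(1) by simp

section \<open>Cyclotomic classes and cyclotomic numbers of order 7\<close>

locale cyclotomic_field =
  fixes \<rho> :: "'a::{finite,field}" and r :: nat
  assumes card_eq: "CARD('a) = 14 * r + 1"
    and primitive: "primitive_element \<rho>"
begin

lemma r_pos: "0 < r"
proof -
  have "card {0::'a, 1} \<le> CARD('a)" by (rule card_mono) auto
  thus ?thesis using card_eq by auto
qed

lemma card_nonzero: "card (UNIV - {0::'a}) = 14 * r"
  by (simp add: card_Diff_subset card_eq)

lemma primitive_nonzero [simp]: "\<rho> \<noteq> 0"
  using primitive by (simp add: primitive_element_def)

lemma ex_power: "x \<noteq> 0 \<Longrightarrow> \<exists>j. x = \<rho> ^ j"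
  using primitive by (simp add: primitive_element_def)

lemma nonzero_subset_powers:
  assumes "\<rho> ^ d = 1" "0 < d"
  shows "UNIV - {0} \<subseteq> (\<lambda>i. \<rho> ^ i) ` {..<d}"
proof
  fix x :: 'a assume "x \<in> UNIV - {0}"
  then obtain j where "x = \<rho> ^ j" using ex_power by blast
  also have "\<dots> = \<rho> ^ (j mod d)" by (rule power_mod_of_power_eq_one[OF assms(1)])
  finally show "x \<in> (\<lambda>i. \<rho> ^ i) ` {..<d}"
    using assms(2) by auto
qed

lemma power_order_eq_one: "\<rho> ^ (14 * r) = 1"
proof -
  have "card ((\<lambda>i. \<rho> ^ i) ` {..14 * r}) \<le> card (UNIV - {0::'a})"
    by (rule card_mono) auto
  hence "\<not> inj_on (\<lambda>i. \<rho> ^ i) {..14 * r}"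
    using card_nonzero by (auto dest: card_image)
  then obtain i j where ij: "i < j" "j \<le> 14 * r" "\<rho> ^ i = \<rho> ^ j"
    unfolding inj_on_def by (metis atMost_iff linorder_neq_iff)
  have "\<rho> ^ i * \<rho> ^ (j - i) = \<rho> ^ i * 1"
    using ij by (metis le_add_diff_inverse less_imp_le mult_1_right power_add)
  hence period: "\<rho> ^ (j - i) = 1" by simp
  have "card (UNIV - {0::'a}) \<le> card ((\<lambda>i. \<rho> ^ i) ` {..<j - i})"
    by (rule card_mono[OF _ nonzero_subset_powers[OF period]]) (use ij in auto)
  also have "\<dots> \<le> j - i"
    using card_image_le[of "{..<j - i}"] by simp
  finally have "j - i = 14 * r" using card_nonzero ij by linarith
  with period show ?thesis by simp
qed

lemma inj_on_power: "inj_on (\<lambda>i. \<rho> ^ i) {..<14 * r}"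
proof (rule eq_card_imp_inj_on)
  have "card (UNIV - {0::'a}) \<le> card ((\<lambda>i. \<rho> ^ i) ` {..<14 * r})"
    by (rule card_mono[OF _ nonzero_subset_powers[OF power_order_eq_one]]) (use r_pos in auto)
  thus "card ((\<lambda>i. \<rho> ^ i) ` {..<14 * r}) = card {..<14 * r}"
    using card_image_le[of "{..<14 * r}" "\<lambda>i. \<rho> ^ i"] card_nonzero by simp
qed simp

lemma power_eq_power_iff: "\<rho> ^ i = \<rho> ^ j \<longleftrightarrow> i mod (14 * r) = j mod (14 * r)"
proof -
  have "\<rho> ^ i = \<rho> ^ j \<longleftrightarrow> \<rho> ^ (i mod (14 * r)) = \<rho> ^ (j mod (14 * r))"
    by (subst (1 2) power_mod_of_power_eq_one[OF power_order_eq_one]) (rule refl)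
  also have "\<dots> \<longleftrightarrow> i mod (14 * r) = j mod (14 * r)"
    by (rule inj_on_eq_iff[OF inj_on_power]) (simp_all add: r_pos)
  finally show ?thesis .
qed

lemma minus_one_eq_power: "-1 = \<rho> ^ (7 * r)"
proof -
  have "(\<rho> ^ (7 * r)) ^ 2 = 1"
    using power_order_eq_one by (metis mult.commute mult.left_commute numeral_Bit0 power_mult mult_2)
  moreover have "\<rho> ^ (7 * r) \<noteq> \<rho> ^ 0"
    unfolding power_eq_power_iff using r_pos by simp
  ultimately show ?thesis by (simp add: power2_eq_1_iff)
qed

lemma power_eq_power_imp_mod_7: "\<rho> ^ i = \<rho> ^ j \<Longrightarrow> i mod 7 = j mod 7"
  unfolding power_eq_power_iff
  using mod_mod_cancel[of 7 "14 * r" i] mod_mod_cancel[of 7 "14 * r" j] by simp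

(* The index i of the class C_i containing x; junk for x = 0. *)
definition cyc_index :: "'a \<Rightarrow> nat" where
  "cyc_index x = (SOME j. x = \<rho> ^ j) mod 7"

lemma cyc_index_power [simp]: "cyc_index (\<rho> ^ j) = j mod 7"
proof -
  have "\<rho> ^ j = \<rho> ^ (SOME i. \<rho> ^ j = \<rho> ^ i)" by (rule someI_ex) auto
  thus ?thesis unfolding cyc_index_def by (metis power_eq_power_imp_mod_7)
qed

lemma cyc_index_less [simp]: "cyc_index x < 7"
  by (simp add: cyc_index_def)

lemma cyc_index_mult:
  assumes "x \<noteq> 0" "y \<noteq> 0"
  shows "cyc_index (x * y) = (cyc_index x + cyc_index y) mod 7"
proof -
  obtain i j where "x = \<rho> ^ i" "y = \<rho> ^ j" using assms ex_power by blast
  thus ?thesis by (simp add: mod_add_eq flip: power_add)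
qed

lemma cyc_index_one [simp]: "cyc_index 1 = 0"
  using cyc_index_power[of 0] by simp

(* -1 = rho^((q - 1)/2) lies in C_0 because 7 divides (q - 1)/2; hence cyclotomic numbers are symmetric. *)
lemma cyc_index_minus_one [simp]: "cyc_index (-1) = 0"
  by (simp add: minus_one_eq_power)

lemma cyc_index_uminus [simp]: "cyc_index (- x) = cyc_index x"
proof (cases "x = 0")
  case False
  thus ?thesis using cyc_index_mult[of "-1" x] by simp
qed simp

lemma cyc_index_divide:
  assumes "x \<noteq> 0" "y \<noteq> 0"
  shows "cyc_index (x / y) = (cyc_index x + 7 - cyc_index y) mod 7"
proof -
  have "cyc_index x = (cyc_index (x / y) + cyc_index y) mod 7"
    using assms cyc_index_mult[of "x / y" y] by simp
  thus ?thesis using add_mod_sub_mod[of "cyc_index (x / y)" 7 "cyc_index y"] by simp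
qed

lemma nonzero_class_eq_image:
  assumes "k < 7"
  shows "{x. x \<noteq> 0 \<and> cyc_index x = k} = (\<lambda>j. \<rho> ^ (7 * j + k)) ` {..<2 * r}"
proof (intro equalityI subsetI)
  fix x assume "x \<in> {x. x \<noteq> 0 \<and> cyc_index x = k}"
  then obtain m where x: "x = \<rho> ^ m" "cyc_index x = k" using ex_power by blast
  define m' where "m' = m mod (14 * r)"
  have "x = \<rho> ^ m'" unfolding x m'_def power_eq_power_iff by simp
  hence "x = \<rho> ^ (7 * (m' div 7) + k)" using x(2) mult_div_mod_eq[of 7 m'] by simp
  moreover have "m' < 2 * r * 7" using r_pos unfolding m'_def by simp
  hence "m' div 7 < 2 * r" by (rule less_mult_imp_div_less)
  ultimately show "x \<in> (\<lambda>j. \<rho> ^ (7 * j + k)) ` {..<2 * r}" by simp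
qed (use assms in auto)

lemma cyc_class_eq: "k < 7 \<Longrightarrow> cyc_class \<rho> r k = {x. x \<noteq> 0 \<and> cyc_index x = k}"
  using r_pos by (auto simp: nonzero_class_eq_image cyc_class_def less_Suc_eq_le[symmetric])

lemma card_nonzero_class: "k < 7 \<Longrightarrow> card {x. x \<noteq> 0 \<and> cyc_index x = k} = 2 * r"
proof -
  assume "k < 7"
  have "inj_on (\<lambda>j. 7 * j + k) {..<2 * r}" by (auto simp: inj_on_def)
  moreover have "(\<lambda>j. 7 * j + k) ` {..<2 * r} \<subseteq> {..<14 * r}" using \<open>k < 7\<close> by auto
  ultimately have "inj_on ((\<lambda>i. \<rho> ^ i) \<circ> (\<lambda>j. 7 * j + k)) {..<2 * r}"
    using inj_on_power by (blast intro: comp_inj_on inj_on_subset)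
  thus ?thesis by (simp add: nonzero_class_eq_image[OF \<open>k < 7\<close>] card_image comp_def)
qed

definition cyc_set :: "nat \<Rightarrow> nat \<Rightarrow> 'a set" where
  "cyc_set a b = {x. x \<noteq> 0 \<and> x \<noteq> 1 \<and> cyc_index (x - 1) = a mod 7 \<and> cyc_index x = b mod 7}"

lemma cyc_num_eq_card_cyc_set: "a < 7 \<Longrightarrow> b < 7 \<Longrightarrow> cyc_num \<rho> r a b = card (cyc_set a b)"
proof -
  assume "a < 7" "b < 7"
  have "(\<lambda>x. x + 1) ` {x. x \<noteq> 0 \<and> cyc_index x = a} \<inter> {x. x \<noteq> 0 \<and> cyc_index x = b} = cyc_set a b"
    using \<open>a < 7\<close> \<open>b < 7\<close> unfolding cyc_set_def
    by (auto simp: image_iff) (metis diff_add_cancel right_minus_eq)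
  thus ?thesis using \<open>a < 7\<close> \<open>b < 7\<close> by (simp add: cyc_num_def cyc_class_eq)
qed

lemma cyc_set_cong: "a mod 7 = a' mod 7 \<Longrightarrow> b mod 7 = b' mod 7 \<Longrightarrow> cyc_set a b = cyc_set a' b'"
  by (simp add: cyc_set_def)

lemma one_minus_mem_cyc_set: "x \<in> cyc_set a b \<Longrightarrow> 1 - x \<in> cyc_set b a"
  using cyc_index_uminus[of "x - 1"] by (auto simp: cyc_set_def)

lemma card_cyc_set_swap: "card (cyc_set a b) = card (cyc_set b a)"
  by (rule card_eq_if_involution[of "\<lambda>x. 1 - x"]) (auto intro: one_minus_mem_cyc_set)

lemma divide_pred_mem_cyc_set:
  assumes "x \<in> cyc_set a b"
  shows "x / (x - 1) \<in> cyc_set (7 - a mod 7) (b mod 7 + 7 - a mod 7)"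
proof -
  have x: "x \<noteq> 0" "x - 1 \<noteq> 0" "cyc_index (x - 1) = a mod 7" "cyc_index x = b mod 7"
    using assms by (auto simp: cyc_set_def)
  have "x / (x - 1) - 1 = 1 / (x - 1)"
    using x(2) by (simp add: divide_diff_eq_iff)
  hence "cyc_index (x / (x - 1) - 1) = (7 - a mod 7) mod 7"
    using cyc_index_divide[of 1 "x - 1"] x by simp
  moreover have "cyc_index (x / (x - 1)) = (b mod 7 + 7 - a mod 7) mod 7"
    using cyc_index_divide[of x "x - 1"] x by simp
  moreover have "x / (x - 1) \<noteq> 0" "x / (x - 1) \<noteq> 1"
    using x(1,2) by simp_all
  ultimately show ?thesis by (simp add: cyc_set_def)
qed

lemma card_cyc_set_shift:
  "card (cyc_set a b) = card (cyc_set ((7 - a mod 7) mod 7) ((b mod 7 + 7 - a mod 7) mod 7))"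
proof -
  let ?A = "cyc_set (7 - a mod 7) (b mod 7 + 7 - a mod 7)"
  have "cyc_set (7 - (7 - a mod 7) mod 7) ((b mod 7 + 7 - a mod 7) mod 7 + 7 - (7 - a mod 7) mod 7)
      = cyc_set a b"
    by (rule cyc_set_cong) (simp_all add: minus_minus_mod sub_mod_sub_minus_mod)
  hence "(\<lambda>x. x / (x - 1)) ` ?A \<subseteq> cyc_set a b"
    using divide_pred_mem_cyc_set by blast
  moreover have "(\<lambda>x. x / (x - 1)) ` cyc_set a b \<subseteq> ?A"
    using divide_pred_mem_cyc_set by blast
  moreover have "x / (x - 1) / (x / (x - 1) - 1) = x" if "x \<noteq> 1" for x :: 'a
    using that by (simp add: divide_diff_eq_iff)
  ultimately have "card (cyc_set a b) = card ?A"
    by (intro card_eq_if_involution[of "\<lambda>x. x / (x - 1)"]) (auto simp: cyc_set_def)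
  also have "?A = cyc_set ((7 - a mod 7) mod 7) ((b mod 7 + 7 - a mod 7) mod 7)"
    by (rule cyc_set_cong) simp_all
  finally show ?thesis .
qed

lemma card_class_pairs_eq_card_cyc_set:
  assumes "y0 \<noteq> 0" "A < 7" "B < 7"
  shows "card {y. y \<noteq> 0 \<and> y \<noteq> y0 \<and> cyc_index y = A \<and> cyc_index (y - y0) = B}
    = card (cyc_set (B + 7 - cyc_index y0) (A + 7 - cyc_index y0))"
    (is "card ?Y = card ?T")
proof -
  have "y / y0 \<in> ?T" if "y \<in> ?Y" for y
  proof -
    have "y / y0 - 1 = (y - y0) / y0" using assms(1) by (simp add: divide_diff_eq_iff)
    thus ?thesis
      using that assms(1) cyc_index_divide[of y y0] cyc_index_divide[of "y - y0" y0]
      by (simp add: cyc_set_def)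
  qed
  moreover have "t * y0 \<in> ?Y" if "t \<in> ?T" for t
  proof -
    have t: "t \<noteq> 0" "t - 1 \<noteq> 0"
      "cyc_index (t - 1) = (B + 7 - cyc_index y0) mod 7" "cyc_index t = (A + 7 - cyc_index y0) mod 7"
      using that by (auto simp: cyc_set_def)
    have "t * y0 - y0 = (t - 1) * y0" by (simp add: algebra_simps)
    thus ?thesis
      using t assms cyc_index_mult[of t y0] cyc_index_mult[of "t - 1" y0]
        sub_mod_add_mod[of A 7 "cyc_index y0"] sub_mod_add_mod[of B 7 "cyc_index y0"]
      by simp
  qed
  ultimately show ?thesis
    using assms(1)
    by (intro bij_betw_same_card[of "\<lambda>y. y / y0"] bij_betw_byWitness[where f' = "\<lambda>t. t * y0"]) auto
qed

lemma card_cyc_set_orbit_1_5: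
  assumes "(a mod 7, b mod 7) \<in> {(1, 5), (5, 1), (6, 4), (4, 6), (2, 3), (3, 2)}"
  shows "card (cyc_set a b) = card (cyc_set 1 5)"
proof -
  have "cyc_set a b = cyc_set (a mod 7) (b mod 7)" by (rule cyc_set_cong) simp_all
  thus ?thesis
    using assms card_cyc_set_shift[of 1 5] card_cyc_set_shift[of 5 1]
      card_cyc_set_swap[of 1 5] card_cyc_set_swap[of 6 4] card_cyc_set_swap[of 2 3]
    by auto
qed

lemma card_cyc_set_orbit_1_3:
  assumes "(a mod 7, b mod 7) \<in> {(1, 3), (3, 1), (6, 2), (2, 6), (4, 5), (5, 4)}"
  shows "card (cyc_set a b) = card (cyc_set 1 3)"
proof -
  have "cyc_set a b = cyc_set (a mod 7) (b mod 7)" by (rule cyc_set_cong) simp_all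
  thus ?thesis
    using assms card_cyc_set_shift[of 1 3] card_cyc_set_shift[of 3 1]
      card_cyc_set_swap[of 1 3] card_cyc_set_swap[of 6 2] card_cyc_set_swap[of 4 5]
    by auto
qed

end

section \<open>The Cayley graph Cay(G_{l,3,q}, S(pi))\<close>

lemma S0_eq: "S0 l = ({..<l} \<times> UNIV \<times> {0}) - {(0, z2zero, 0)}"
  by (auto simp: S0_def)

lemma mem_S0_iff: "(a, z, x) \<in> S0 l \<longleftrightarrow> a < l \<and> x = 0 \<and> (a, z) \<noteq> (0, z2zero)"
  by (auto simp: S0_eq)

lemma card_S0: "0 < l \<Longrightarrow> card (S0 l :: (nat \<times> z2_3 \<times> 'b::zero) set) = 8 * l - 1"
  by (simp add: S0_eq card_Diff_singleton card_cartesian_product card_z2_3)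

context cyclotomic_field
begin

lemma Sz_eq: "Sz \<rho> \<pi> z = (\<lambda>x. (0, z, x)) ` {x. x \<noteq> 0 \<and> cyc_index x = \<pi> z mod 7}"
proof -
  have "(\<exists>j. x = \<rho> ^ j \<and> j mod 7 = \<pi> z mod 7) \<longleftrightarrow> x \<noteq> 0 \<and> cyc_index x = \<pi> z mod 7" for x
    using ex_power by (metis cyc_index_power power_not_zero primitive_nonzero)
  thus ?thesis by (auto simp: Sz_def)
qed

lemma mem_Sset_iff:
  "(a, z, x) \<in> Sset l \<rho> \<pi> \<longleftrightarrow>
    (a < l \<and> x = 0 \<and> (a, z) \<noteq> (0, z2zero)) \<or>
    (a = 0 \<and> z \<noteq> z2zero \<and> x \<noteq> 0 \<and> cyc_index x = \<pi> z mod 7)"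
  unfolding Sset_def S0_def Sz_eq by blast

end

locale cayley_construction = cyclotomic_field \<rho> r for \<rho> :: "'a::{finite,field}" and r +
  fixes l :: nat and \<pi> :: "z2_3 \<Rightarrow> nat" and c :: nat
  assumes l_pos: "0 < l"
    and labelling_bij: "bij_betw (\<lambda>z. \<pi> z mod 7) (UNIV - {z2zero}) {..<7}"
    \<comment> \<open>by card_class_pairs_eq_card_cyc_set, this counts the y in C_(pi w) with y - y0 in
        C_(pi (w + z)), for any y0 in C_(pi z)\<close>
    and card_cyc_set_labelling: "\<And>z w. z \<noteq> z2zero \<Longrightarrow> w \<noteq> z2zero \<Longrightarrow> w \<noteq> z \<Longrightarrow>
      card (cyc_set (\<pi> (z2add w z) mod 7 + 7 - \<pi> z mod 7) (\<pi> w mod 7 + 7 - \<pi> z mod 7)) = c"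
    and l_eq: "8 * l = 6 * c + 2"
begin

abbreviation S :: "(nat \<times> z2_3 \<times> 'a) set" where "S \<equiv> Sset l \<rho> \<pi>"

lemma labelling_inj: "z \<noteq> z2zero \<Longrightarrow> w \<noteq> z2zero \<Longrightarrow> \<pi> z mod 7 = \<pi> w mod 7 \<Longrightarrow> z = w"
  using labelling_bij by (auto simp: bij_betw_def inj_on_def)

lemma labelling_surj: "k < 7 \<Longrightarrow> \<exists>z. z \<noteq> z2zero \<and> \<pi> z mod 7 = k"
proof -
  assume "k < 7"
  hence "k \<in> (\<lambda>z. \<pi> z mod 7) ` (UNIV - {z2zero})"
    using labelling_bij by (simp add: bij_betw_def)
  thus ?thesis by blast
qed

lemma Sset_subset_Gcar: "S \<subseteq> Gcar l"
  using l_pos by (auto simp: mem_Sset_iff)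

lemma zero_notin_Sset: "(0, z2zero, 0) \<notin> S"
  by (simp add: mem_Sset_iff)

lemma Sset_minus_closed: "d \<in> S \<Longrightarrow> gdiff l d (0, z2zero, 0) \<in> S"
  using l_pos by (cases d) (auto simp: mem_Sset_iff gdiff_zero_right simp del: gdiff.simps)

lemma card_Sset: "card S = 8 * l - 2 + CARD('a)"
proof -
  have "S = S0 l \<union> (\<Union>z \<in> UNIV - {z2zero}. Sz \<rho> \<pi> z)"
    by (simp add: Sset_def)
  moreover have "S0 l \<inter> (\<Union>z \<in> UNIV - {z2zero}. Sz \<rho> \<pi> z) = {}"
    by (auto simp: S0_def Sz_eq)
  moreover have "card (\<Union>z \<in> UNIV - {z2zero}. Sz \<rho> \<pi> z) = (\<Sum>z \<in> UNIV - {z2zero}. card (Sz \<rho> \<pi> z))"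
    by (rule card_UN_disjoint) (auto simp: Sz_eq)
  moreover have "card (Sz \<rho> \<pi> z) = 2 * r" for z
    unfolding Sz_eq by (subst card_image) (auto simp: inj_on_def card_nonzero_class)
  moreover have "card (UNIV - {z2zero}) = 7"
    by (simp add: card_Diff_singleton card_z2_3)
  moreover have "finite (S0 l :: (nat \<times> z2_3 \<times> 'a) set)" "finite (\<Union>z \<in> UNIV - {z2zero}. Sz \<rho> \<pi> z)"
    by (simp_all add: S0_eq Sz_eq)
  ultimately have "card S = card (S0 l :: (nat \<times> z2_3 \<times> 'a) set) + 7 * (2 * r)"
    by (simp add: card_Un_disjoint)
  also have "\<dots> = (8 * l - 1) + 14 * r"
    using l_pos by (simp add: card_S0)
  finally show ?thesis using card_eq l_pos by simp
qed

lemma common_Sset_S0: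
  assumes D: "(a0, z0, 0) \<in> S"
  shows "{d \<in> S. gdiff l (a0, z0, 0) d \<in> S} = S0 l - {(a0, z0, 0)}"
proof (rule set_eqI)
  fix d :: "nat \<times> z2_3 \<times> 'a"
  obtain a w y where d: "d = (a, w, y)" by (cases d)
  have a0: "a0 < l" "a0 = 0 \<Longrightarrow> z0 \<noteq> z2zero" using D by (auto simp: mem_Sset_iff)
  show "d \<in> {d \<in> S. gdiff l (a0, z0, 0) d \<in> S} \<longleftrightarrow> d \<in> S0 l - {(a0, z0, 0)}"
  proof (cases "y = 0")
    case True
    have "(a + l - a0) mod l < l" using l_pos by simp
    thus ?thesis using True a0 sub_mod_eq_zero_iff[of a0 l a]
      by (auto simp: d mem_Sset_iff mem_S0_iff z2add_eq_zero_iff)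
  next
    case False
    have "\<not> ((a, w, y) \<in> S \<and> ((a + l - a0) mod l, z2add w z0, y) \<in> S)"
    proof
      assume "(a, w, y) \<in> S \<and> ((a + l - a0) mod l, z2add w z0, y) \<in> S"
      hence "a = 0" "w \<noteq> z2zero" "cyc_index y = \<pi> w mod 7"
        and "(l - a0) mod l = 0" "z2add w z0 \<noteq> z2zero" "cyc_index y = \<pi> (z2add w z0) mod 7"
        using False by (auto simp: mem_Sset_iff)
      hence "a0 = 0" "z2add w z0 = w"
        using a0(1) sub_mod_eq_zero_iff[of a0 l 0] labelling_inj by auto
      thus False using a0(2) z2add_eq_right_iff[of z0 w] by (simp add: z2add_commute)
    qed
    thus ?thesis using False by (auto simp: d mem_S0_iff)
  qed
qed

lemma card_common_Sset_S0: "(a0, z0, 0) \<in> S \<Longrightarrow> card {d \<in> S. gdiff l (a0, z0, 0) d \<in> S} = 8 * l - 2"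
  using l_pos by (simp add: common_Sset_S0 card_S0 S0_eq card_Diff_singleton mem_Sset_iff)

lemma common_Sset_Sz:
  assumes z: "z \<noteq> z2zero" and y0: "y0 \<noteq> 0" "cyc_index y0 = \<pi> z mod 7"
  shows "{d \<in> S. gdiff l (0, z, y0) d \<in> S} = (\<Union>w \<in> UNIV - {z2zero, z}. (\<lambda>y. (0, w, y)) `
    {y. y \<noteq> 0 \<and> y \<noteq> y0 \<and> cyc_index y = \<pi> w mod 7 \<and> cyc_index (y - y0) = \<pi> (z2add w z) mod 7})"
    (is "?L = ?R")
proof (rule set_eqI)
  fix d :: "nat \<times> z2_3 \<times> 'a"
  obtain a w y where d: "d = (a, w, y)" by (cases d)
  have "y \<noteq> 0 \<and> y \<noteq> y0" if "(a, w, y) \<in> S" "(a mod l, z2add w z, y - y0) \<in> S"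
  proof
    show "y \<noteq> 0"
    proof
      assume "y = 0"
      hence "a = 0" "w \<noteq> z2zero" "z2add w z \<noteq> z2zero" "\<pi> z mod 7 = \<pi> (z2add w z) mod 7"
        using that y0 by (auto simp: mem_Sset_iff)
      thus False using labelling_inj[OF z] z2add_eq_right_iff by metis
    qed
    show "y \<noteq> y0"
    proof
      assume "y = y0"
      hence "w \<noteq> z2zero" "z2add w z \<noteq> z2zero" "\<pi> w mod 7 = \<pi> z mod 7"
        using that y0 by (auto simp: mem_Sset_iff)
      thus False using labelling_inj[OF _ z] z2add_eq_zero_iff by metis
    qed
  qed
  thus "d \<in> ?L \<longleftrightarrow> d \<in> ?R"
    using l_pos by (auto simp: d mem_Sset_iff z2add_eq_zero_iff)
qed

lemma card_common_Sset_Sz: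
  assumes z: "z \<noteq> z2zero" and y0: "y0 \<noteq> 0" "cyc_index y0 = \<pi> z mod 7"
  shows "card {d \<in> S. gdiff l (0, z, y0) d \<in> S} = 8 * l - 2"
proof -
  let ?Y = "\<lambda>w. {y. y \<noteq> 0 \<and> y \<noteq> y0 \<and> cyc_index y = \<pi> w mod 7 \<and> cyc_index (y - y0) = \<pi> (z2add w z) mod 7}"
  have "card (\<Union>w \<in> UNIV - {z2zero, z}. (\<lambda>y. (0::nat, w, y)) ` ?Y w)
      = (\<Sum>w \<in> UNIV - {z2zero, z}. card ((\<lambda>y. (0::nat, w, y)) ` ?Y w))"
    by (rule card_UN_disjoint) auto
  also have "\<dots> = (\<Sum>w \<in> UNIV - {z2zero, z}. c)"
  proof (rule sum.cong)
    fix w assume "w \<in> UNIV - {z2zero, z}"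
    hence "card (?Y w) = c"
      using card_class_pairs_eq_card_cyc_set[OF y0(1)] card_cyc_set_labelling[OF z] y0(2) by auto
    thus "card ((\<lambda>y. (0::nat, w, y)) ` ?Y w) = c"
      by (subst card_image) (auto simp: inj_on_def)
  qed simp
  also have "\<dots> = 6 * c"
    using z by (simp add: card_Diff_subset card_z2_3)
  finally show ?thesis
    using common_Sset_Sz[OF assms] l_eq by simp
qed

lemma card_common_neighbours:
  assumes "u \<in> Gcar l" "v \<in> Gcar l" "cay_adj l \<rho> \<pi> u v"
  shows "card {w \<in> Gcar l. cay_adj l \<rho> \<pi> u w \<and> cay_adj l \<rho> \<pi> v w} = 8 * l - 2"
proof -
  obtain a0 z0 y0 where D: "gdiff l u v = (a0, z0, y0)" by (cases "gdiff l u v")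
  hence "(a0, z0, y0) \<in> S" using assms(3) by (simp add: cay_adj_def)
  moreover have "card {w \<in> Gcar l. cay_adj l \<rho> \<pi> u w \<and> cay_adj l \<rho> \<pi> v w}
      = card {d \<in> S. gdiff l (a0, z0, y0) d \<in> S}"
    unfolding cay_adj_def D[symmetric]
    by (rule card_cayley_common_neighbours[OF l_pos assms(1,2) Sset_subset_Gcar])
  ultimately show ?thesis
    using card_common_Sset_S0 card_common_Sset_Sz by (cases "y0 = 0") (auto simp: mem_Sset_iff)
qed

definition clique :: "(nat \<times> z2_3 \<times> 'a) set" where
  "clique = {..<l} \<times> UNIV \<times> {0}"

lemma clique_subset_Gcar: "clique \<subseteq> Gcar l"
  by (auto simp: clique_def)

lemma clique_adj:
  assumes "u \<in> clique" "v \<in> clique" "u \<noteq> v"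
  shows "cay_adj l \<rho> \<pi> u v"
proof -
  obtain a z x where d: "gdiff l u v = (a, z, x)" by (cases "gdiff l u v")
  have "x = 0" using assms(1,2) d by (cases u, cases v) (auto simp: clique_def)
  moreover have "a < l" using d gdiff_mem_Gcar[OF l_pos, of u v] by simp
  moreover have "gdiff l u v \<noteq> (0, z2zero, 0)"
    using assms clique_subset_Gcar gdiff_eq_zero_iff by blast
  ultimately show ?thesis by (simp add: cay_adj_def d mem_Sset_iff)
qed

lemma clique_neighbours_outside:
  assumes "v \<in> Gcar l - clique"
  shows "card {w \<in> clique. cay_adj l \<rho> \<pi> v w} = 1"
proof -
  obtain a1 z1 x1 where v: "v = (a1, z1, x1)" by (cases v)
  have a1: "a1 < l" and x1: "x1 \<noteq> 0" using assms by (auto simp: v clique_def)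
  obtain z0 where z0: "z0 \<noteq> z2zero" "\<pi> z0 mod 7 = cyc_index x1"
    using labelling_surj[of "cyc_index x1"] by auto
  have "{w \<in> clique. cay_adj l \<rho> \<pi> v w} = {(a1, z2add z0 z1, 0)}"
  proof (rule set_eqI)
    fix w :: "nat \<times> z2_3 \<times> 'a"
    obtain b z x where w: "w = (b, z, x)" by (cases w)
    have "z2add z z1 \<noteq> z2zero \<and> cyc_index x1 = \<pi> (z2add z z1) mod 7 \<longleftrightarrow> z2add z z1 = z0"
      using z0 labelling_inj[of "z2add z z1" z0] by auto
    also have "\<dots> \<longleftrightarrow> z = z2add z0 z1"
      by (rule z2add_eq_iff)
    finally have "z2add z z1 \<noteq> z2zero \<and> cyc_index x1 = \<pi> (z2add z z1) mod 7 \<longleftrightarrow> z = z2add z0 z1" .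
    thus "w \<in> {w \<in> clique. cay_adj l \<rho> \<pi> v w} \<longleftrightarrow> w \<in> {(a1, z2add z0 z1, 0)}"
      using a1 x1 sub_mod_eq_zero_iff[of a1 l b]
      by (auto simp: v w clique_def cay_adj_def mem_Sset_iff)
  qed
  thus ?thesis by simp
qed

lemma card_clique: "card clique = 8 * l"
  by (simp add: clique_def card_cartesian_product card_z2_3)

lemma edge_regular_with_regular_clique:
  "edge_regular (Gcar l) (cay_adj l \<rho> \<pi>) (8 * l * CARD('a)) (8 * l - 2 + CARD('a)) (8 * l - 2) \<and>
   (\<exists>C. regular_clique (Gcar l) (cay_adj l \<rho> \<pi>) C \<and> card C = 8 * l)"
proof
  have in_clique: "(0, z2zero, 0) \<in> clique" "(0, (False, False, True), 0) \<in> clique"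
    using l_pos by (simp_all add: clique_def)
  hence "cay_adj l \<rho> \<pi> (0, z2zero, 0) (0, (False, False, True), 0)"
    by (rule clique_adj) (simp add: z2zero_def)
  hence edge: "\<exists>u \<in> Gcar l. \<exists>v \<in> Gcar l. cay_adj l \<rho> \<pi> u v"
    using in_clique clique_subset_Gcar by blast
  show "edge_regular (Gcar l) (cay_adj l \<rho> \<pi>) (8 * l * CARD('a)) (8 * l - 2 + CARD('a)) (8 * l - 2)"
    unfolding edge_regular_def
  proof (intro conjI ballI impI)
    fix u v :: "nat \<times> z2_3 \<times> 'a" assume "u \<in> Gcar l" "v \<in> Gcar l"
    thus "cay_adj l \<rho> \<pi> u v \<longleftrightarrow> cay_adj l \<rho> \<pi> v u"
      using gdiff_swap_mem[OF _ _ Sset_minus_closed] unfolding cay_adj_def by blast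
  next
    fix v :: "nat \<times> z2_3 \<times> 'a" assume "v \<in> Gcar l"
    thus "card {w \<in> Gcar l. cay_adj l \<rho> \<pi> v w} = 8 * l - 2 + CARD('a)"
      using card_cayley_neighbours[OF l_pos _ Sset_subset_Gcar] card_Sset by (simp add: cay_adj_def)
  qed (use edge zero_notin_Sset card_common_neighbours
      in \<open>simp_all add: finite_Gcar card_Gcar cay_adj_def\<close>)
  have "regular_clique (Gcar l) (cay_adj l \<rho> \<pi>) clique"
    unfolding regular_clique_def
    using clique_subset_Gcar clique_adj clique_neighbours_outside by (intro conjI exI[of _ 1]) auto
  thus "\<exists>C. regular_clique (Gcar l) (cay_adj l \<rho> \<pi>) C \<and> card C = 8 * l"
    using card_clique by blast
qed

end

section \<open>The labellings Psi1 and Psi2\<close>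

lemma UNIV_z2_3: "(UNIV :: z2_3 set) = {True, False} \<times> {True, False} \<times> {True, False}"
  by auto

lemma lessThan_7: "{..<7::nat} = {0, 1, 2, 3, 4, 5, 6}"
  by auto

lemma Psi1_simps [simp]:
  "Psi1 (False, False, True) = 2" "Psi1 (False, True, False) = 4" "Psi1 (False, True, True) = 5"
  "Psi1 (True, False, False) = 1" "Psi1 (True, False, True) = 6" "Psi1 (True, True, False) = 3"
  "Psi1 (True, True, True) = 0"
  by (simp_all add: Psi1_def)

lemma Psi2_simps [simp]:
  "Psi2 (False, False, True) = 3" "Psi2 (False, True, False) = 6" "Psi2 (False, True, True) = 4"
  "Psi2 (True, False, False) = 5" "Psi2 (True, False, True) = 2" "Psi2 (True, True, False) = 1"
  "Psi2 (True, True, True) = 0"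
  by (simp_all add: Psi2_def z2zero_def)

lemma Psi1_bij: "bij_betw (\<lambda>z. Psi1 z mod 7) (UNIV - {z2zero}) {..<7}"
  unfolding bij_betw_def lessThan_7 by (simp add: UNIV_z2_3 z2zero_def insert_Diff_if) auto

lemma Psi2_bij: "bij_betw (\<lambda>z. Psi2 z mod 7) (UNIV - {z2zero}) {..<7}"
  unfolding bij_betw_def lessThan_7 by (simp add: UNIV_z2_3 z2zero_def insert_Diff_if) auto

lemma Psi1_orbit:
  assumes "z \<noteq> z2zero" "w \<noteq> z2zero" "w \<noteq> z"
  shows "((Psi1 (z2add w z) mod 7 + 7 - Psi1 z mod 7) mod 7, (Psi1 w mod 7 + 7 - Psi1 z mod 7) mod 7)
    \<in> {(1, 5), (5, 1), (6, 4), (4, 6), (2, 3), (3, 2)}"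
proof -
  obtain a b c d e f where "z = (a, b, c)" "w = (d, e, f)" by (cases z, cases w)
  thus ?thesis using assms
    by (cases a; cases b; cases c; cases d; cases e; cases f) (simp_all add: z2zero_def)
qed

lemma Psi2_orbit:
  assumes "z \<noteq> z2zero" "w \<noteq> z2zero" "w \<noteq> z"
  shows "((Psi2 (z2add w z) mod 7 + 7 - Psi2 z mod 7) mod 7, (Psi2 w mod 7 + 7 - Psi2 z mod 7) mod 7)
    \<in> {(1, 3), (3, 1), (6, 2), (2, 6), (4, 5), (5, 4)}"
proof -
  obtain a b c d e f where "z = (a, b, c)" "w = (d, e, f)" by (cases z, cases w)
  thus ?thesis using assms
    by (cases a; cases b; cases c; cases d; cases e; cases f) (simp_all add: z2zero_def)
qed

context cyclotomic_field
begin

lemma cayley_construction_Psi1: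
  assumes "0 < l" "8 * l = 6 * c + 2" "c = cyc_num \<rho> r 1 5"
  shows "cayley_construction \<rho> r l Psi1 c"
proof unfold_locales
  fix z w assume "z \<noteq> z2zero" "w \<noteq> z2zero" "w \<noteq> z"
  thus "card (cyc_set (Psi1 (z2add w z) mod 7 + 7 - Psi1 z mod 7) (Psi1 w mod 7 + 7 - Psi1 z mod 7)) = c"
    using card_cyc_set_orbit_1_5[OF Psi1_orbit] cyc_num_eq_card_cyc_set[of 1 5] assms(3) by simp
qed (use assms Psi1_bij in simp_all)

lemma cayley_construction_Psi2:
  assumes "0 < l" "8 * l = 6 * c + 2" "c = cyc_num \<rho> r 1 3"
  shows "cayley_construction \<rho> r l Psi2 c"
proof unfold_locales
  fix z w assume "z \<noteq> z2zero" "w \<noteq> z2zero" "w \<noteq> z"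
  thus "card (cyc_set (Psi2 (z2add w z) mod 7 + 7 - Psi2 z mod 7) (Psi2 w mod 7 + 7 - Psi2 z mod 7)) = c"
    using card_cyc_set_orbit_1_3[OF Psi2_orbit] cyc_num_eq_card_cyc_set[of 1 3] assms(3) by simp
qed (use assms Psi2_bij in simp_all)

end

lemma eight_l_eq_six_c_plus_two:
  "(c::nat) mod 4 = 1 \<Longrightarrow> l = (3 * c + 1) div 4 \<Longrightarrow> 0 < l \<and> 8 * l = 6 * c + 2"
proof -
  assume c: "c mod 4 = 1" and l: "l = (3 * c + 1) div 4"
  obtain k where k: "c = 4 * k + 1" using c mult_div_mod_eq[of 4 c] by metis
  have "l = 3 * k + 1" using l unfolding k by simp
  thus ?thesis using k by simp
qed

theorem theorem3p3:
  fixes \<rho> :: "'a::{finite,field}" and c l :: nat and \<pi> :: "z2_3 \<Rightarrow> nat"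
  assumes "CARD('a) mod 14 = 1"
    and "primitive_element \<rho>"
    and "c > 0" and "c mod 4 = 1" and "l = (3 * c + 1) div 4"
    and "(c = cyc_num \<rho> ((CARD('a) - 1) div 14) 1 5 \<and> \<pi> = Psi1) \<or>
         (c = cyc_num \<rho> ((CARD('a) - 1) div 14) 1 3 \<and> \<pi> = Psi2)"
  shows "edge_regular (Gcar l) (cay_adj l \<rho> \<pi>)
           (8 * l * CARD('a)) (8 * l - 2 + CARD('a)) (8 * l - 2) \<and>
         (\<exists>C. regular_clique (Gcar l) (cay_adj l \<rho> \<pi>) C \<and> card C = 8 * l)"
proof -
  define r where "r = CARD('a) div 14"
  have card: "CARD('a) = 14 * r + 1"
    using assms(1) mult_div_mod_eq[of 14 "CARD('a)"] unfolding r_def by simp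
  interpret cyclotomic_field \<rho> r
    using card assms(2) by unfold_locales
  have "0 < l" "8 * l = 6 * c + 2"
    using eight_l_eq_six_c_plus_two[OF assms(4,5)] by simp_all
  hence "cayley_construction \<rho> r l \<pi> c"
    using assms(6) cayley_construction_Psi1 cayley_construction_Psi2 by (auto simp: card)
  thus ?thesis
    by (rule cayley_construction.edge_regular_with_regular_clique)
qed

end
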